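(* Let $r\ge 2$ and $m$ be integers with $0\le 2m\le r$, and put $n=2r-4m$. Let $\{x_0,\dots,x_r\}$ be the basis of $S^r(\mathbb{C}^2)$ and $\{w_0,\dots,w_n\}$ the basis of $S^n(\mathbb{C}^2)$ described in the context. Let $q_0$ be a bilinear form on $S^r(\mathbb{C}^2)$ such that for all $0\le i,j\le r$, $$0=(i+1)\,q_0(x_{i+1},x_j)+(j+1)\,q_0(x_i,x_{j+1}),\qquad (2r-2i-2j-n)\,q_0(x_i,x_j)=0 .$$ Then there exists a unique $\mathfrak{sl}_2(\mathbb{C})$-equivariant linear map $f:S^r(\mathbb{C}^2)\otimes S^r(\mathbb{C}^2)\to S^n(\mathbb{C}^2)$ whose component along $w_0$ is $q_0$, i.e. $f(u\otimes v)=\sum_{k=0}^n q_k(u,v)\,w_k$ for bilinear forms $q_k$ with $q_0$ the given one. Moreover, $f$ is symmetric if and only if $q_0$ is symmetric.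
   Context: $\mathfrak{sl}_2(\mathbb{C})$ has basis $X=\begin{pmatrix}0&1\\0&0\end{pmatrix}$, $H=\begin{pmatrix}1&0\\0&-1\end{pmatrix}$, $Y=\begin{pmatrix}0&0\\1&0\end{pmatrix}$, acting on the irreducible modules $S^d(\mathbb{C}^2)$ (binary forms of degree $d$). Let $x_0\in S^r(\mathbb{C}^2)$ be a highest weight vector and $x_i=Y^ix_0/i!$ for $0\le i\le r$; then $Yx_i=(i+1)x_{i+1}$, $Xx_i=(r-i+1)x_{i-1}$, $Hx_i=(r-2i)x_i$, with the convention $x_{-1}=x_{r+1}=0$ (and $x_l=0$ for $l\notin[0,r]$). Similarly $w_0\in S^n(\mathbb{C}^2)$ is a highest weight vector and $w_k=Y^kw_0/k!$, $0\le k\le n$. *)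

theory Defs
  imports Complex_Main
begin

text \<open>Model of S^d(C^2): a vector is its coordinate function w.r.t. the basis
  x_0,...,x_d of the context; coordinates beyond d vanish.\<close>

type_synonym vec = "nat \<Rightarrow> complex"

definition Sym :: "nat \<Rightarrow> vec set" where
  "Sym d = {v. \<forall>i>d. v i = 0}"

definition bas :: "nat \<Rightarrow> nat \<Rightarrow> vec" where
  "bas d i = (\<lambda>l. if l = i \<and> i \<le> d then 1 else 0)"

definition vadd :: "vec \<Rightarrow> vec \<Rightarrow> vec" where
  "vadd u v = (\<lambda>l. u l + v l)"

definition vscale :: "complex \<Rightarrow> vec \<Rightarrow> vec" where
  "vscale c v = (\<lambda>l. c * v l)"

text \<open>Action of X, H, Y: Y x_i = (i+1) x_{i+1}, X x_i = (d-i+1) x_{i-1}, H x_i = (d-2i) x_i.\<close>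
definition Yop :: "nat \<Rightarrow> vec \<Rightarrow> vec" where
  "Yop d v = (\<lambda>i. if i \<le> d then of_nat i * v (i - 1) else 0)"

definition Xop :: "nat \<Rightarrow> vec \<Rightarrow> vec" where
  "Xop d v = (\<lambda>i. if i \<le> d then of_nat (d - i) * v (i + 1) else 0)"

definition Hop :: "nat \<Rightarrow> vec \<Rightarrow> vec" where
  "Hop d v = (\<lambda>i. if i \<le> d then (of_int (int d - 2 * int i)) * v i else 0)"

text \<open>Action of the general element [[a,b],[c,-a]] = a H + b X + c Y of sl_2(C).\<close>
definition act :: "nat \<Rightarrow> complex \<Rightarrow> complex \<Rightarrow> complex \<Rightarrow> vec \<Rightarrow> vec" where
  "act d a b c v = (\<lambda>i. a * Hop d v i + b * Xop d v i + c * Yop d v i)"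

definition bilinear_form_on :: "nat \<Rightarrow> (vec \<Rightarrow> vec \<Rightarrow> complex) \<Rightarrow> bool" where
  "bilinear_form_on r q \<longleftrightarrow>
     (\<forall>u\<in>Sym r. \<forall>u'\<in>Sym r. \<forall>v\<in>Sym r. \<forall>c.
        q (vadd u u') v = q u v + q u' v \<and> q (vscale c u) v = c * q u v \<and>
        q v (vadd u u') = q v u + q v u' \<and> q v (vscale c u) = c * q v u)"

text \<open>Linear maps S^r \<otimes> S^r \<rightarrow> S^n, represented (universal property of the tensor
  product) by bilinear maps B with f(u \<otimes> v) = B u v.\<close>
definition bilinear_map_on :: "nat \<Rightarrow> nat \<Rightarrow> (vec \<Rightarrow> vec \<Rightarrow> vec) \<Rightarrow> bool" where
  "bilinear_map_on r n B \<longleftrightarrow>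
     (\<forall>u\<in>Sym r. \<forall>v\<in>Sym r. B u v \<in> Sym n) \<and>
     (\<forall>u\<in>Sym r. \<forall>u'\<in>Sym r. \<forall>v\<in>Sym r. \<forall>c.
        B (vadd u u') v = vadd (B u v) (B u' v) \<and> B (vscale c u) v = vscale c (B u v) \<and>
        B v (vadd u u') = vadd (B v u) (B v u') \<and> B v (vscale c u) = vscale c (B v u))"

definition equivariant :: "nat \<Rightarrow> nat \<Rightarrow> (vec \<Rightarrow> vec \<Rightarrow> vec) \<Rightarrow> bool" where
  "equivariant r n B \<longleftrightarrow>
     (\<forall>a b c. \<forall>u\<in>Sym r. \<forall>v\<in>Sym r.
        vadd (B (act r a b c u) v) (B u (act r a b c v)) = act n a b c (B u v))"

definition symmetric_on :: "nat \<Rightarrow> (vec \<Rightarrow> vec \<Rightarrow> 'a) \<Rightarrow> bool" where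
  "symmetric_on r B \<longleftrightarrow> (\<forall>u\<in>Sym r. \<forall>v\<in>Sym r. B u v = B v u)"

end

theory Submission imports Defs begin

text \<open>A bilinear form on \<open>S\<^sup>r\<close> is encoded by its Gram matrix \<open>Q i j = q(x\<^sub>i, x\<^sub>j)\<close>, on
  which \<open>sl\<^sub>2\<close> acts by \<open>(Z\<cdot>Q)(u,v) = Q(Zu,v) + Q(u,Zv)\<close>. Equivariance of \<open>f = \<Sum>\<^sub>k q\<^sub>k w\<^sub>k\<close>
  with respect to \<open>X\<close> says \<open>X\<cdot>q\<^sub>k = (n-k) q\<^sub>k\<^sub>+\<^sub>1\<close>, so the components are forced to be
  \<open>q\<^sub>k = X\<^sup>k\<cdot>q\<^sub>0 / (n(n-1)\<cdots>(n-k+1))\<close>, which gives uniqueness. The hypotheses say that \<open>q\<^sub>0\<close> is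
  killed by \<open>Y\<close> and has \<open>H\<close>-weight \<open>n\<close>; the commutation relations then give
  \<open>Y\<cdot>X\<^sup>k\<^sup>+\<^sup>1\<cdot>q\<^sub>0 = (k+1)(n-k) X\<^sup>k\<cdot>q\<^sub>0\<close>. Since high powers of \<open>X\<close> vanish for degree reasons, this
  forces \<open>X\<^sup>n\<^sup>+\<^sup>1\<cdot>q\<^sub>0 = 0\<close>, and the \<open>q\<^sub>k\<close> satisfy the \<open>Y\<close>- and \<open>H\<close>-relations as well, which gives
  existence. Symmetry of \<open>q\<^sub>0\<close> is preserved by \<open>X\<close>. The argument works for every \<open>n\<close>.\<close>

type_synonym gram = "nat \<Rightarrow> nat \<Rightarrow> complex"

definition gram_form :: "nat \<Rightarrow> gram \<Rightarrow> vec \<Rightarrow> vec \<Rightarrow> complex" where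
  "gram_form r M u v = (\<Sum>i\<le>r. \<Sum>j\<le>r. u i * v j * M i j)"

definition gram_of :: "nat \<Rightarrow> (vec \<Rightarrow> vec \<Rightarrow> complex) \<Rightarrow> gram" where
  "gram_of r q = (\<lambda>i j. q (bas r i) (bas r j))"

definition gram_supported :: "nat \<Rightarrow> gram \<Rightarrow> bool" where
  "gram_supported r M \<longleftrightarrow> (\<forall>i j. r < i \<or> r < j \<longrightarrow> M i j = 0)"

definition gram_scale :: "complex \<Rightarrow> gram \<Rightarrow> gram" where
  "gram_scale c M = (\<lambda>i j. c * M i j)"

definition gram_X :: "nat \<Rightarrow> gram \<Rightarrow> gram" where
  "gram_X r M = (\<lambda>i j. (if i = 0 then 0 else (of_nat r - of_nat i + 1) * M (i - 1) j)
                     + (if j = 0 then 0 else (of_nat r - of_nat j + 1) * M i (j - 1)))"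

definition gram_Y :: "gram \<Rightarrow> gram" where
  "gram_Y M = (\<lambda>i j. (of_nat i + 1) * M (i + 1) j + (of_nat j + 1) * M i (j + 1))"

definition gram_H :: "nat \<Rightarrow> gram \<Rightarrow> gram" where
  "gram_H r M = (\<lambda>i j. (2 * of_nat r - 2 * of_nat i - 2 * of_nat j) * M i j)"

lemma gram_Y_gram_X: "gram_Y (gram_X r M) = (\<lambda>i j. gram_X r (gram_Y M) i j + gram_H r M i j)"
  by (intro ext) (rename_tac i j, case_tac i; case_tac j;
      simp add: gram_X_def gram_Y_def gram_H_def algebra_simps)

lemma gram_H_gram_X: "gram_H r (gram_X r M) = (\<lambda>i j. gram_X r (gram_H r M) i j - 2 * gram_X r M i j)"
  by (intro ext) (rename_tac i j, case_tac i; case_tac j;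
      simp add: gram_X_def gram_H_def algebra_simps)

lemma gram_X_scale: "gram_X r (gram_scale c M) = gram_scale c (gram_X r M)"
  and gram_Y_scale: "gram_Y (gram_scale c M) = gram_scale c (gram_Y M)"
  and gram_H_scale: "gram_H r (gram_scale c M) = gram_scale c (gram_H r M)"
  and gram_scale_scale: "gram_scale a (gram_scale b M) = gram_scale (a * b) M"
  and gram_scale_zero: "gram_scale c (\<lambda>i j. 0) = (\<lambda>i j. 0)"
  by (auto simp: gram_X_def gram_Y_def gram_H_def gram_scale_def algebra_simps fun_eq_iff)

lemma gram_X_zero: "gram_X r (\<lambda>i j. 0) = (\<lambda>i j. 0)"
  and gram_Y_zero: "gram_Y (\<lambda>i j. 0) = (\<lambda>i j. 0)"
  by (auto simp: gram_X_def gram_Y_def fun_eq_iff)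

lemma gram_supported_gram_X: "gram_supported r M \<Longrightarrow> gram_supported r (gram_X r M)"
  unfolding gram_supported_def gram_X_def
  by (intro allI impI, rename_tac i j, case_tac "i = Suc r"; case_tac "j = Suc r") auto

lemma gram_X_pow_supported: "gram_supported r M \<Longrightarrow> gram_supported r ((gram_X r ^^ k) M)"
  by (induction k) (simp_all add: gram_supported_gram_X)

lemma gram_X_pow_below_diagonal: "i + j < k \<Longrightarrow> (gram_X r ^^ k) M i j = 0"
proof (induction k arbitrary: i j)
  case (Suc k)
  then show ?case by (auto simp: gram_X_def)
qed simp

lemma gram_X_pow_large:
  assumes "gram_supported r M" and "2 * r < k"
  shows "(gram_X r ^^ k) M = (\<lambda>i j. 0)"
proof (intro ext)
  fix i j
  show "(gram_X r ^^ k) M i j = 0"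
  proof (cases "r < i \<or> r < j")
    case True
    then show ?thesis using gram_X_pow_supported[OF assms(1)] unfolding gram_supported_def by blast
  next
    case False
    then show ?thesis using gram_X_pow_below_diagonal assms(2) by simp
  qed
qed

lemma gram_X_transpose: "gram_X r (\<lambda>i j. M j i) = (\<lambda>i j. gram_X r M j i)"
  unfolding gram_X_def by (intro ext) (rule add.commute)

lemma gram_X_pow_transpose: "(gram_X r ^^ k) (\<lambda>i j. M j i) = (\<lambda>i j. (gram_X r ^^ k) M j i)"
proof (induction k)
  case (Suc k)
  show ?case unfolding funpow.simps comp_apply Suc.IH by (rule gram_X_transpose)
qed simp

lemma gram_form_altdef: "gram_form r M u v = (\<Sum>i\<le>r. u i * (\<Sum>j\<le>r. v j * M i j))"
  unfolding gram_form_def by (simp add: sum_distrib_left algebra_simps)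

lemma gram_form_transpose: "gram_form r (\<lambda>i j. M j i) v u = gram_form r M u v"
  unfolding gram_form_def by (subst sum.swap) (simp add: algebra_simps)

lemma gram_form_sym: "(\<And>i j. M i j = M j i) \<Longrightarrow> gram_form r M u v = gram_form r M v u"
  using gram_form_transpose[of r M v u] by simp

lemma gram_form_scale: "gram_form r (gram_scale c M) u v = c * gram_form r M u v"
  unfolding gram_form_def gram_scale_def by (simp add: sum_distrib_left algebra_simps)

lemma gram_form_add_left: "gram_form r M (\<lambda>i. u i + u' i) v = gram_form r M u v + gram_form r M u' v"
  and gram_form_add_right: "gram_form r M v (\<lambda>i. u i + u' i) = gram_form r M v u + gram_form r M v u'"
  and gram_form_scale_left: "gram_form r M (\<lambda>i. c * u i) v = c * gram_form r M u v"
  and gram_form_scale_right: "gram_form r M v (\<lambda>i. c * u i) = c * gram_form r M v u"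
  unfolding gram_form_def by (simp_all add: sum.distrib[symmetric] sum_distrib_left algebra_simps)

lemma sum_Xop:
  "(\<Sum>i\<le>r. Xop r u i * f i) = (\<Sum>i\<le>r. u i * (if i = 0 then 0 else (of_nat r - of_nat i + 1) * f (i - 1)))"
proof (cases r)
  case (Suc s)
  have "(\<Sum>i\<le>r. Xop r u i * f i) = (\<Sum>i\<le>s. Xop r u i * f i)"
    by (simp add: Suc Xop_def)
  also have "\<dots> = (\<Sum>i\<le>s. u (Suc i) * ((of_nat r - of_nat (Suc i) + 1) * f i))"
    by (rule sum.cong) (auto simp: Suc Xop_def of_nat_diff)
  also have "\<dots> = (\<Sum>i\<le>r. u i * (if i = 0 then 0 else (of_nat r - of_nat i + 1) * f (i - 1)))"
    by (simp add: Suc sum.atMost_Suc_shift del: sum.atMost_Suc)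
  finally show ?thesis .
qed (simp add: Xop_def)

lemma sum_Yop:
  assumes "f (Suc r) = 0"
  shows "(\<Sum>i\<le>r. Yop r u i * f i) = (\<Sum>i\<le>r. u i * ((of_nat i + 1) * f (i + 1)))"
proof (cases r)
  case (Suc s)
  have "(\<Sum>i\<le>r. Yop r u i * f i) = (\<Sum>i\<le>s. Yop r u (Suc i) * f (Suc i))"
    by (simp add: Suc sum.atMost_Suc_shift Yop_def del: sum.atMost_Suc)
  also have "\<dots> = (\<Sum>i\<le>s. u i * ((of_nat i + 1) * f (i + 1)))"
    by (rule sum.cong) (auto simp: Suc Yop_def algebra_simps)
  also have "\<dots> = (\<Sum>i\<le>r. u i * ((of_nat i + 1) * f (i + 1)))"
    using assms by (simp add: Suc)
  finally show ?thesis .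
qed (use assms in \<open>simp add: Yop_def\<close>)

lemma gram_form_Xop: "gram_form r M (Xop r u) v + gram_form r M u (Xop r v) = gram_form r (gram_X r M) u v"
proof -
  have left: "gram_form r M (Xop r u) v = (\<Sum>i\<le>r. \<Sum>j\<le>r. u i * v j *
      (if i = 0 then 0 else (of_nat r - of_nat i + 1) * M (i - 1) j))" for M u v
    unfolding gram_form_altdef sum_Xop
    by (rule sum.cong[OF refl]) (auto simp: sum_distrib_left algebra_simps)
  have right: "gram_form r M u (Xop r v) = (\<Sum>i\<le>r. \<Sum>j\<le>r. u i * v j *
      (if j = 0 then 0 else (of_nat r - of_nat j + 1) * M i (j - 1)))"
    unfolding gram_form_transpose[of r M, symmetric] left
    by (subst sum.swap) (simp add: algebra_simps)
  show ?thesis unfolding left right unfolding gram_form_def sum.distrib[symmetric]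
    by (intro sum.cong refl) (simp add: gram_X_def algebra_simps)
qed

lemma gram_form_Yop:
  assumes "gram_supported r M"
  shows "gram_form r M (Yop r u) v + gram_form r M u (Yop r v) = gram_form r (gram_Y M) u v"
proof -
  have left: "gram_form r M (Yop r u) v =
      (\<Sum>i\<le>r. \<Sum>j\<le>r. u i * v j * ((of_nat i + 1) * M (i + 1) j))"
    if "gram_supported r M" for M u v
    unfolding gram_form_altdef
    by (subst sum_Yop) (use that in \<open>auto simp: gram_supported_def sum_distrib_left algebra_simps
        intro!: sum.cong\<close>)
  have "gram_supported r (\<lambda>i j. M j i)" using assms by (auto simp: gram_supported_def)
  from left[OF this] have right: "gram_form r M u (Yop r v) =
      (\<Sum>i\<le>r. \<Sum>j\<le>r. u i * v j * ((of_nat j + 1) * M i (j + 1)))"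
    unfolding gram_form_transpose[of r M, symmetric]
    by (subst sum.swap) (simp add: algebra_simps)
  show ?thesis unfolding left[OF assms] right unfolding gram_form_def sum.distrib[symmetric]
    by (intro sum.cong refl) (simp add: gram_Y_def algebra_simps)
qed

lemma gram_form_Hop: "gram_form r M (Hop r u) v + gram_form r M u (Hop r v) = gram_form r (gram_H r M) u v"
  unfolding gram_form_def sum.distrib[symmetric]
  by (intro sum.cong refl) (simp add: Hop_def gram_H_def algebra_simps)

lemma gram_form_act:
  assumes "gram_supported r M"
  shows "gram_form r M (act r a b c u) v + gram_form r M u (act r a b c v) =
    a * gram_form r (gram_H r M) u v + b * gram_form r (gram_X r M) u v + c * gram_form r (gram_Y M) u v"
  unfolding gram_form_Hop[symmetric] gram_form_Xop[symmetric] gram_form_Yop[OF assms, symmetric]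
  by (simp add: act_def gram_form_add_left gram_form_add_right gram_form_scale_left
      gram_form_scale_right algebra_simps)

lemma bilinear_form_onD:
  assumes "bilinear_form_on r q" and "u \<in> Sym r" "u' \<in> Sym r" "v \<in> Sym r"
  shows "q (vadd u u') v = q u v + q u' v" "q (vscale c u) v = c * q u v"
    "q v (vadd u u') = q v u + q v u'" "q v (vscale c u) = c * q v u"
  using assms unfolding bilinear_form_on_def by blast+

lemma bilinear_form_on_swap: "bilinear_form_on r q \<Longrightarrow> bilinear_form_on r (\<lambda>u v. q v u)"
  unfolding bilinear_form_on_def by blast

lemma bas_Sym: "bas r i \<in> Sym r"
  by (simp add: bas_def Sym_def)

lemma bas_eq_zero: "r < i \<Longrightarrow> bas r i = (\<lambda>l. 0)"
  by (simp add: bas_def fun_eq_iff)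

lemma Sym_bas_expansion: "u \<in> Sym r \<Longrightarrow> (\<lambda>l. \<Sum>i\<le>r. u i * bas r i l) = u"
  by (rule ext, rename_tac l, case_tac "l \<le> r") (auto simp: bas_def Sym_def if_distrib cong: if_cong)

lemma bilinear_form_on_sum_left:
  assumes q: "bilinear_form_on r q" and v: "v \<in> Sym r"
  shows "q (\<lambda>l. \<Sum>i\<le>k. c i * bas r i l) v = (\<Sum>i\<le>k. c i * q (bas r i) v)"
proof (induction k)
  case 0
  have "(\<lambda>l. \<Sum>i\<le>0. c i * bas r i l) = vscale (c 0) (bas r 0)" by (simp add: vscale_def)
  then show ?case using bilinear_form_onD[OF q bas_Sym bas_Sym v] by simp
next
  case (Suc k)
  have "(\<lambda>l. \<Sum>i\<le>Suc k. c i * bas r i l) =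
      vadd (\<lambda>l. \<Sum>i\<le>k. c i * bas r i l) (vscale (c (Suc k)) (bas r (Suc k)))"
    by (simp add: vadd_def vscale_def)
  moreover have "(\<lambda>l. \<Sum>i\<le>k. c i * bas r i l) \<in> Sym r" "vscale (c (Suc k)) (bas r (Suc k)) \<in> Sym r"
    by (auto simp: Sym_def bas_def vscale_def intro!: sum.neutral)
  ultimately show ?case
    using bilinear_form_onD[OF q _ _ v] bilinear_form_onD[OF q bas_Sym bas_Sym v] Suc by simp
qed

lemma bilinear_form_on_gram_form:
  assumes q: "bilinear_form_on r q" and u: "u \<in> Sym r" and v: "v \<in> Sym r"
  shows "q u v = gram_form r (gram_of r q) u v"
proof -
  have "q u v = (\<Sum>i\<le>r. u i * q (bas r i) v)"
    using bilinear_form_on_sum_left[OF q v, where c = u and k = r] by (simp add: Sym_bas_expansion[OF u])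
  also have "\<dots> = (\<Sum>i\<le>r. u i * (\<Sum>j\<le>r. v j * q (bas r i) (bas r j)))"
    using bilinear_form_on_sum_left[OF bilinear_form_on_swap[OF q] bas_Sym, where c = v and k = r]
    by (simp add: Sym_bas_expansion[OF v])
  finally show ?thesis by (simp add: gram_form_altdef gram_of_def)
qed

lemma gram_of_supported:
  assumes "bilinear_form_on r q"
  shows "gram_supported r (gram_of r q)"
proof -
  have "q (\<lambda>l. 0) v = 0" "q v (\<lambda>l. 0) = 0" if "v \<in> Sym r" for v
    using bilinear_form_onD(2,4)[OF assms _ _ that, of "\<lambda>l. 0" "\<lambda>l. 0" 0]
    by (simp_all add: Sym_def vscale_def)
  then show ?thesis by (auto simp: gram_supported_def gram_of_def bas_eq_zero bas_Sym)
qed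

subsection \<open>Lowest weight Gram matrices and their \<open>X\<close>-strings\<close>

definition falling :: "nat \<Rightarrow> nat \<Rightarrow> complex" where
  "falling n k = (\<Prod>t<k. of_nat n - of_nat t)"

lemma falling_Suc: "falling n (Suc k) = falling n k * (of_nat n - of_nat k)"
  by (simp add: falling_def)

lemma falling_nonzero: "k \<le> n \<Longrightarrow> falling n k \<noteq> 0"
  by (auto simp: falling_def)

locale lowest_weight_gram =
  fixes r n :: nat and Q :: gram
  assumes weight: "gram_H r Q = gram_scale (of_nat n) Q"
    and lowest: "gram_Y Q = (\<lambda>i j. 0)"
    and supported: "gram_supported r Q"
begin

abbreviation X_pow :: "nat \<Rightarrow> gram" where
  "X_pow k \<equiv> (gram_X r ^^ k) Q"

lemma gram_H_X_pow: "gram_H r (X_pow k) = gram_scale (of_nat n - 2 * of_nat k) (X_pow k)"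
proof (induction k)
  case (Suc k)
  then show ?case
    by (simp add: gram_H_gram_X gram_X_scale) (simp add: gram_scale_def fun_eq_iff algebra_simps)
qed (simp add: weight)

lemma gram_Y_X_pow_Suc:
  "gram_Y (X_pow (Suc k)) = gram_scale ((of_nat k + 1) * (of_nat n - of_nat k)) (X_pow k)"
proof (induction k)
  case 0
  show ?case by (simp add: gram_Y_gram_X lowest gram_X_zero weight gram_scale_def)
next
  case (Suc k)
  have "gram_Y (X_pow (Suc (Suc k))) =
      (\<lambda>i j. gram_X r (gram_Y (X_pow (Suc k))) i j + gram_H r (X_pow (Suc k)) i j)"
    by (simp add: gram_Y_gram_X)
  also have "\<dots> = gram_scale ((of_nat (Suc k) + 1) * (of_nat n - of_nat (Suc k))) (X_pow (Suc k))"
    unfolding Suc gram_H_X_pow gram_X_scale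
    by (simp add: gram_scale_def fun_eq_iff algebra_simps)
  finally show ?case .
qed

lemma X_pow_eq_zero:
  assumes "n < k"
  shows "X_pow k = (\<lambda>i j. 0)"
  using le_add1[of k "2 * r + 1"]
proof (induction rule: inc_induct)
  case base
  show ?case by (rule gram_X_pow_large[OF supported]) simp
next
  case (step l)
  have "gram_scale ((of_nat l + 1) * (of_nat n - of_nat l)) (X_pow l) = (\<lambda>i j. 0)"
    using gram_Y_X_pow_Suc[of l, unfolded step.IH gram_Y_zero] by simp
  moreover have "(of_nat l + 1) * (of_nat n - of_nat l) \<noteq> (0::complex)"
    using assms step.hyps(1) by (metis add_is_0 of_nat_Suc of_nat_eq_0_iff of_nat_eq_iff
        mult_eq_0_iff right_minus_eq nat.distinct(1) add.commute less_le_not_le)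
  ultimately show ?case by (simp add: gram_scale_def fun_eq_iff)
qed

definition component :: "nat \<Rightarrow> gram" where
  "component k = gram_scale (inverse (falling n k)) (X_pow k)"

lemma component_0: "component 0 = Q"
  by (simp add: component_def falling_def gram_scale_def)

lemma component_supported: "gram_supported r (component k)"
  using gram_X_pow_supported[OF supported, of k]
  by (simp add: component_def gram_supported_def gram_scale_def)

lemma gram_H_component: "gram_H r (component k) = gram_scale (of_nat n - 2 * of_nat k) (component k)"
  by (simp add: component_def gram_H_scale gram_H_X_pow gram_scale_scale mult.commute)

lemma gram_X_component:
  assumes "k \<le> n"
  shows "gram_X r (component k) = gram_scale (of_nat n - of_nat k) (component (Suc k))"
proof (cases "k = n")
  case True
  then show ?thesis
    using X_pow_eq_zero[of "Suc k"] by (simp add: component_def gram_X_scale gram_scale_zero)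
next
  case False
  with assms have "inverse (falling n k) = (of_nat n - of_nat k) * inverse (falling n (Suc k))"
    by (simp add: falling_Suc falling_nonzero)
  then show ?thesis by (simp add: component_def gram_X_scale gram_scale_scale)
qed

lemma gram_Y_component:
  assumes "k \<le> n"
  shows "gram_Y (component k) = gram_scale (of_nat k) (component (k - 1))"
proof (cases k)
  case 0
  then show ?thesis by (simp add: component_0 lowest gram_scale_def)
next
  case (Suc l)
  with assms have "inverse (falling n (Suc l)) * ((of_nat l + 1) * (of_nat n - of_nat l)) =
      of_nat k * inverse (falling n l)"
    by (simp add: falling_Suc falling_nonzero field_simps)
  then show ?thesis
    unfolding Suc component_def gram_Y_scale gram_Y_X_pow_Suc gram_scale_scale by simp
qed

lemma component_sym: "(\<And>i j. Q i j = Q j i) \<Longrightarrow> component k i j = component k j i"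
  using gram_X_pow_transpose[where r = r and k = k and M = Q]
  by (simp add: component_def gram_scale_def fun_eq_iff)

definition extension :: "vec \<Rightarrow> vec \<Rightarrow> vec" where
  "extension u v = (\<lambda>k. if k \<le> n then gram_form r (component k) u v else 0)"

lemma extension_0: "extension u v 0 = gram_form r Q u v"
  by (simp add: extension_def component_0)

lemma extension_bilinear: "bilinear_map_on r n extension"
  unfolding bilinear_map_on_def
  by (simp add: extension_def Sym_def vadd_def vscale_def fun_eq_iff
      gram_form_add_left gram_form_add_right gram_form_scale_left gram_form_scale_right)

lemma extension_equivariant: "equivariant r n extension"
  unfolding equivariant_def
proof (intro allI ballI ext)
  fix a b c u v k
  let ?q = "\<lambda>k. gram_form r (component k) u v"
  show "vadd (extension (act r a b c u) v) (extension u (act r a b c v)) k = act n a b c (extension u v) k"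
  proof (cases "k \<le> n")
    case True
    have H: "Hop n (extension u v) k = (of_nat n - 2 * of_nat k) * ?q k"
      using True by (simp add: Hop_def extension_def)
    have X: "Xop n (extension u v) k = (of_nat n - of_nat k) * ?q (Suc k)"
      using True by (cases "k = n") (auto simp: Xop_def extension_def of_nat_diff)
    have Y: "Yop n (extension u v) k = of_nat k * ?q (k - 1)"
      using True by (cases k) (simp_all add: Yop_def extension_def)
    have "vadd (extension (act r a b c u) v) (extension u (act r a b c v)) k =
        gram_form r (component k) (act r a b c u) v + gram_form r (component k) u (act r a b c v)"
      using True by (simp add: vadd_def extension_def)
    also have "\<dots> = a * ((of_nat n - 2 * of_nat k) * ?q k) + b * ((of_nat n - of_nat k) * ?q (Suc k))
        + c * (of_nat k * ?q (k - 1))"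
      unfolding gram_form_act[OF component_supported] gram_H_component gram_X_component[OF True]
        gram_Y_component[OF True] gram_form_scale ..
    also have "\<dots> = act n a b c (extension u v) k"
      unfolding act_def H X Y ..
    finally show ?thesis .
  qed (simp add: extension_def vadd_def act_def Hop_def Xop_def Yop_def)
qed

lemma extension_unique:
  assumes B: "bilinear_map_on r n B" "equivariant r n B"
    and B0: "\<forall>u\<in>Sym r. \<forall>v\<in>Sym r. B u v 0 = gram_form r Q u v"
    and u: "u \<in> Sym r" and v: "v \<in> Sym r"
  shows "B u v = extension u v"
proof -
  have "B u v k = gram_form r (component k) u v" if "k \<le> n" for k
    using that u v
  proof (induction k arbitrary: u v)
    case 0
    then show ?case using B0 by (simp add: component_0)
  next
    case (Suc k)
    have Xop_Sym: "Xop r w \<in> Sym r" for w by (simp add: Xop_def Sym_def)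
    have "vadd (B (act r 0 1 0 u) v) (B u (act r 0 1 0 v)) k = act n 0 1 0 (B u v) k"
      using B(2) Suc.prems unfolding equivariant_def by metis
    then have "of_nat (n - k) * B u v (Suc k) = B (Xop r u) v k + B u (Xop r v) k"
      using Suc.prems by (simp add: act_def vadd_def Xop_def)
    also have "\<dots> = (of_nat n - of_nat k) * gram_form r (component (Suc k)) u v"
      using Suc Xop_Sym gram_form_Xop[of r "component k" u v] gram_X_component[of k]
      by (simp add: gram_form_scale)
    finally show ?case using Suc.prems by (simp add: of_nat_diff)
  qed
  moreover have "B u v \<in> Sym n" using B(1) u v unfolding bilinear_map_on_def by blast
  ultimately show ?thesis by (auto simp: extension_def Sym_def)
qed

lemma extension_symmetric: "(\<And>i j. Q i j = Q j i) \<Longrightarrow> symmetric_on r extension"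
  by (auto simp: symmetric_on_def extension_def fun_eq_iff intro: gram_form_sym component_sym)

end

lemma gram_of_lowest:
  assumes "bilinear_form_on r q"
    and "\<forall>i\<le>r. \<forall>j\<le>r. 0 = of_nat (i + 1) * q (bas r (i + 1)) (bas r j)
                        + of_nat (j + 1) * q (bas r i) (bas r (j + 1))"
  shows "gram_Y (gram_of r q) = (\<lambda>i j. 0)"
proof (intro ext)
  fix i j
  show "gram_Y (gram_of r q) i j = 0"
  proof (cases "i \<le> r \<and> j \<le> r")
    case True
    then show ?thesis using assms(2) by (simp add: gram_Y_def gram_of_def add.commute)
  next
    case False
    then show ?thesis using gram_of_supported[OF assms(1)] by (auto simp: gram_Y_def gram_supported_def)
  qed
qed

lemma gram_of_weight:
  assumes "bilinear_form_on r q"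
    and "\<forall>i\<le>r. \<forall>j\<le>r. of_int (2 * int r - 2 * int i - 2 * int j - int n) * q (bas r i) (bas r j) = 0"
  shows "gram_H r (gram_of r q) = gram_scale (of_nat n) (gram_of r q)"
proof (intro ext)
  fix i j
  show "gram_H r (gram_of r q) i j = gram_scale (of_nat n) (gram_of r q) i j"
  proof (cases "i \<le> r \<and> j \<le> r")
    case True
    then show ?thesis using assms(2) by (simp add: gram_H_def gram_scale_def gram_of_def algebra_simps)
  next
    case False
    then show ?thesis using gram_of_supported[OF assms(1)]
      by (auto simp: gram_H_def gram_scale_def gram_supported_def)
  qed
qed

theorem mainTheorem1:
  fixes r m n :: nat and q :: "vec \<Rightarrow> vec \<Rightarrow> complex"
  assumes "r \<ge> 2" and "2 * m \<le> r" and "n = 2 * r - 4 * m"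
    and "bilinear_form_on r q"
    and "\<forall>i\<le>r. \<forall>j\<le>r. 0 = of_nat (i + 1) * q (bas r (i + 1)) (bas r j)
                          + of_nat (j + 1) * q (bas r i) (bas r (j + 1))"
    and "\<forall>i\<le>r. \<forall>j\<le>r.
           of_int (2 * int r - 2 * int i - 2 * int j - int n) * q (bas r i) (bas r j) = 0"
  shows "\<exists>B. bilinear_map_on r n B \<and> equivariant r n B \<and>
              (\<forall>u\<in>Sym r. \<forall>v\<in>Sym r. B u v 0 = q u v) \<and>
              (\<forall>B'. bilinear_map_on r n B' \<and> equivariant r n B' \<and>
                    (\<forall>u\<in>Sym r. \<forall>v\<in>Sym r. B' u v 0 = q u v) \<longrightarrow>
                    (\<forall>u\<in>Sym r. \<forall>v\<in>Sym r. B' u v = B u v)) \<and>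
              (symmetric_on r B \<longleftrightarrow> symmetric_on r q)"
proof -
  interpret lowest_weight_gram r n "gram_of r q"
    using gram_of_weight[OF assms(4,6)] gram_of_lowest[OF assms(4,5)] gram_of_supported[OF assms(4)]
    by unfold_locales
  have q_eq: "q u v = gram_form r (gram_of r q) u v" if "u \<in> Sym r" "v \<in> Sym r" for u v
    using bilinear_form_on_gram_form[OF assms(4) that] .
  have symmetric_iff: "symmetric_on r extension \<longleftrightarrow> symmetric_on r q"
  proof
    assume "symmetric_on r extension"
    then show "symmetric_on r q"
      unfolding symmetric_on_def by (metis extension_0 q_eq)
  next
    assume "symmetric_on r q"
    then show "symmetric_on r extension"
      by (intro extension_symmetric) (simp add: symmetric_on_def gram_of_def bas_Sym)
  qed
  show ?thesis
  proof (intro exI[of _ extension] conjI allI impI ballI extension_bilinear extension_equivariant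
      symmetric_iff)
    fix u v assume "u \<in> Sym r" "v \<in> Sym r"
    then show "extension u v 0 = q u v" by (simp add: extension_0 q_eq)
  next
    fix B' u v assume "bilinear_map_on r n B' \<and> equivariant r n B' \<and>
      (\<forall>u\<in>Sym r. \<forall>v\<in>Sym r. B' u v 0 = q u v)" and "u \<in> Sym r" "v \<in> Sym r"
    then show "B' u v = extension u v" by (intro extension_unique) (simp_all add: q_eq)
  qed
qed

end
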